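(* Let $\varphi$ be an individually rational rule. There exists a pick-an-object mechanism (i.e. a menu function $\mathbb{S}$) that sequentializes $\varphi$ if and only if $\varphi$ satisfies monotonic discoverability.
   Context: Let $A=\{a_1,\dots,a_n\}$ be a finite set of agents and $O=\{o_1,\dots,o_m\}\cup\{\emptyset\}$ a finite set of object types, where $\emptyset$ is the null object. Each agent $a$ has a strict preference $P_a$ (a linear order) over $O$, with weak version $R_a$ ($oR_ao'$ iff $oP_ao'$ or $o=o'$). $\mathbb{P}$ is the set of strict preferences over $O$, $\mathcal{P}=\mathbb{P}^n$ the set of preference profiles $P=(P_{a_1},\dots,P_{a_n})$. An allocation is any function $\mu:A\to O$; $\mathcal{M}$ is the set of allocations. A rule is a function $\varphi:\mathcal{P}\to\mathcal{M}$, with $\varphi_a(P)=\varphi(P)(a)$. $\varphi$ is individually rational if $\varphi_a(P)\,R_a\,\emptyset$ for all $P\in\mathcal{P}$, $a\in A$. Lower contour set: for $P\in\mathcal{P}$ and an allocation $\mu$, $\mathcal{L}(P,\mu)$ is the set of profiles $P'\in\mathcal{P}$ such that, for every agent $a$, $P'_a$ agrees with $P_a$ on $\mu(a)$ and on all objects that $P_a$ ranks above $\mu(a)$ (the same objects are ranked above $\mu(a)$, in the same order), while $P'_a$ may differ arbitrarily on objects ranked below $\mu(a)$ by $P_a$. A rule $\varphi$ satisfies monotonic discoverability if for every allocation $\mu$ and every $P\in\mathcal{P}$, either $\varphi(P)=\mu$, or there is an agent $a^*\in A$ such that $\varphi_{a^*}(P')\neq\mu(a^* )$ for all $P'\in\mathcal{L}(P,\mu)$.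 Pick-an-object mechanisms: a choice history is a finite (possibly empty) sequence $h=((\Omega_1,\omega_1),\dots,(\Omega_k,\omega_k))$ with $\Omega_j\subseteq O$ and $\omega_j\in\Omega_j$; its last choice is $\omega_k$. A preference $P_a$ is consistent with $h$ if $\omega_j R_a o$ for all $j$ and all $o\in\Omega_j$. A collective history $h^A=(h_1,\dots,h_n)$ is an $n$-tuple of choice histories (one per agent); $h^{A-\emptyset}$ denotes the tuple of empty histories. A menu function $\mathbb{S}$ assigns to each collective history an $n$-tuple of subsets of $O$ (menus) such that all menus in $\mathbb{S}(h^{A-\emptyset})$ are non-empty, and for any other collective history $h^A$ in which agent $i$'s history ends with $(\Omega_k,\omega_k)$, agent $i$'s menu is a subset of $\Omega_k\setminus\{\omega_k\}$. The pick-an-object mechanism $\mathbb{S}$ runs as follows: in period 1 every agent chooses one element from her menu in $\mathbb{S}(h^{A-\emptyset})$, and (menu, choice) is appended to her history. In each period $t>1$, with current collective history $h^A$, if every menu in $\mathbb{S}(h^A)$ is empty the procedure stops and each agent is assigned the last object she chose; otherwise each agent with a non-empty menu chooses one element of it and (menu, choice) is appended to her history, while agents with empty menus make no choice. An agent follows the straightforward strategy with respect to $P_a$ if whenever presented with a menu she chooses its $P_a$-most-preferred element. $\mathbb{S}$ sequentializes $\varphi$ if for every $P\in\mathcal{P}$, when every agent $a$ follows the straightforward strategy with respect to $P_a$, the mechanism outputs $\varphi(P)$. *)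

theory Defs
  imports Main
begin

text \<open>Objects: the type 'o option, where None is the null object and Some o are the
  object types o_1..o_m. Agents: a finite type 'ag.\<close>

type_synonym 'o obj = "'o option"

text \<open>A strict preference P over objects: P x y means x is strictly preferred to y.\<close>
type_synonym 'o pref = "'o obj \<Rightarrow> 'o obj \<Rightarrow> bool"

definition strict_pref :: "'o pref \<Rightarrow> bool" where
  "strict_pref P \<longleftrightarrow> (\<forall>x. \<not> P x x) \<and> (\<forall>x y z. P x y \<longrightarrow> P y z \<longrightarrow> P x z)
     \<and> (\<forall>x y. x \<noteq> y \<longrightarrow> P x y \<or> P y x)"

definition weak_pref :: "'o pref \<Rightarrow> 'o obj \<Rightarrow> 'o obj \<Rightarrow> bool" where
  "weak_pref P x y \<longleftrightarrow> P x y \<or> x = y"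

type_synonym ('ag, 'o) profile = "'ag \<Rightarrow> 'o pref"
type_synonym ('ag, 'o) allocation = "'ag \<Rightarrow> 'o obj"
type_synonym ('ag, 'o) rule = "('ag, 'o) profile \<Rightarrow> ('ag, 'o) allocation"

definition is_profile :: "('ag, 'o) profile \<Rightarrow> bool" where
  "is_profile P \<longleftrightarrow> (\<forall>a. strict_pref (P a))"

definition individually_rational :: "('ag, 'o) rule \<Rightarrow> bool" where
  "individually_rational \<phi> \<longleftrightarrow> (\<forall>P a. is_profile P \<longrightarrow> weak_pref (P a) (\<phi> P a) None)"

definition lower_contour :: "('ag, 'o) profile \<Rightarrow> ('ag, 'o) allocation \<Rightarrow> ('ag, 'o) profile set" where
  "lower_contour P \<mu> = {P'. is_profile P' \<and>
     (\<forall>a. {x. P' a x (\<mu> a)} = {x. P a x (\<mu> a)} \<and>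
          (\<forall>x y. P a x (\<mu> a) \<longrightarrow> P a y (\<mu> a) \<longrightarrow> (P' a x y \<longleftrightarrow> P a x y)))}"

definition monotonic_discoverability :: "('ag, 'o) rule \<Rightarrow> bool" where
  "monotonic_discoverability \<phi> \<longleftrightarrow>
     (\<forall>\<mu> P. is_profile P \<longrightarrow>
        \<phi> P = \<mu> \<or> (\<exists>a. \<forall>P' \<in> lower_contour P \<mu>. \<phi> P' a \<noteq> \<mu> a))"

type_synonym 'o history = "('o obj set \<times> 'o obj) list"
type_synonym ('ag, 'o) coll_history = "'ag \<Rightarrow> 'o history"
type_synonym ('ag, 'o) menu_fun = "('ag, 'o) coll_history \<Rightarrow> 'ag \<Rightarrow> 'o obj set"

definition choice_history :: "'o history \<Rightarrow> bool" where
  "choice_history h \<longleftrightarrow> (\<forall>p \<in> set h. snd p \<in> fst p)"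

definition empty_history :: "('ag, 'o) coll_history" where
  "empty_history = (\<lambda>_. [])"

definition menu_function :: "('ag, 'o) menu_fun \<Rightarrow> bool" where
  "menu_function S \<longleftrightarrow>
     (\<forall>a. S empty_history a \<noteq> {}) \<and>
     (\<forall>h. (\<forall>a. choice_history (h a)) \<and> h \<noteq> empty_history \<longrightarrow>
        (\<forall>a. h a \<noteq> [] \<longrightarrow> S h a \<subseteq> fst (last (h a)) - {snd (last (h a))}))"

definition best :: "'o pref \<Rightarrow> 'o obj set \<Rightarrow> 'o obj" where
  "best R M = (THE x. x \<in> M \<and> (\<forall>y \<in> M. y \<noteq> x \<longrightarrow> R x y))"

text \<open>One period of the mechanism under straightforward play: every agent with a
  non-empty menu picks her most preferred element of it.\<close>
definition mech_step :: "('ag, 'o) menu_fun \<Rightarrow> ('ag, 'o) profile \<Rightarrow> ('ag, 'o) coll_history \<Rightarrow> ('ag, 'o) coll_history" where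
  "mech_step S P h = (\<lambda>a. if S h a = {} then h a else h a @ [(S h a, best (P a) (S h a))])"

definition mech_hist :: "('ag, 'o) menu_fun \<Rightarrow> ('ag, 'o) profile \<Rightarrow> nat \<Rightarrow> ('ag, 'o) coll_history" where
  "mech_hist S P t = (mech_step S P ^^ t) empty_history"

text \<open>The mechanism stops at the (first) history where all menus are empty (such a history
  is a fixpoint of mech_step, hence unique), and each agent gets her last choice.\<close>
definition sequentializes :: "('ag, 'o) menu_fun \<Rightarrow> ('ag, 'o) rule \<Rightarrow> bool" where
  "sequentializes S \<phi> \<longleftrightarrow>
     (\<forall>P. is_profile P \<longrightarrow>
        (\<exists>t. (\<forall>a. S (mech_hist S P t) a = {}) \<and>
             (\<forall>a. snd (last (mech_hist S P t a)) = \<phi> P a)))"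

end

theory Submission
  imports Defs
begin

text \<open>
  Necessity: suppose \<open>S\<close> sequentializes \<open>\<phi>\<close> and \<open>\<phi> P \<noteq> \<mu>\<close>. If under straightforward play at \<open>P\<close>
  no agent \<open>b\<close> ever picks an object she ranks below \<open>\<mu> b\<close>, then only the parts of the preferences
  above \<open>\<mu>\<close> are ever consulted, so every profile of \<open>L(P, \<mu>)\<close> generates the same run and the
  allocation \<open>\<phi> P \<noteq> \<mu>\<close>. Otherwise take the first period in which some \<open>b\<close> does so: up to that
  period every profile of \<open>L(P, \<mu>)\<close> generates the same run, \<open>b\<close>'s menu then misses \<open>\<mu> b\<close>, and all
  her later choices are taken from that menu.

  Sufficiency: let every agent walk down her preference list, one object per period, for as long as
  no profile consistent with what has been revealed assigns her the object she currently holds.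
  When everybody has stopped, every profile consistent with the revealed information lies in the
  lower contour set \<open>L(P, \<mu>)\<close> of the current choices \<open>\<mu>\<close>. So if \<open>\<mu> \<noteq> \<phi> P\<close>, the agent singled out by
  monotonic discoverability would not have stopped.
\<close>

section \<open>Strict preferences and their best elements\<close>

lemma strict_pref_irrefl: "strict_pref R \<Longrightarrow> \<not> R x x"
  by (simp add: strict_pref_def)

lemma strict_pref_trans: "strict_pref R \<Longrightarrow> R x y \<Longrightarrow> R y z \<Longrightarrow> R x z"
  unfolding strict_pref_def by blast

lemma strict_pref_total: "strict_pref R \<Longrightarrow> x \<noteq> y \<Longrightarrow> R x y \<or> R y x"
  unfolding strict_pref_def by blast

lemma strict_pref_asym: "strict_pref R \<Longrightarrow> R x y \<Longrightarrow> \<not> R y x"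
  unfolding strict_pref_def by blast

lemma best_eqI:
  assumes "strict_pref R" "x \<in> M" "\<And>y. y \<in> M \<Longrightarrow> y \<noteq> x \<Longrightarrow> R x y"
  shows "best R M = x"
  unfolding best_def
proof (rule the_equality)
  fix z
  assume z: "z \<in> M \<and> (\<forall>y\<in>M. y \<noteq> z \<longrightarrow> R z y)"
  show "z = x"
  proof (rule ccontr)
    assume "z \<noteq> x"
    then have "R z x" "R x z"
      using z assms(2,3) by auto
    then show False
      using strict_pref_asym[OF assms(1)] by blast
  qed
qed (use assms in blast)

lemma best_exists:
  assumes R: "strict_pref R" and "finite M" "M \<noteq> {}"
  shows "\<exists>x\<in>M. \<forall>y\<in>M. y \<noteq> x \<longrightarrow> R x y"
  using assms(2,3)
proof (induction M rule: finite_ne_induct)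
  case (singleton x)
  then show ?case by simp
next
  case (insert x F)
  then obtain m where m: "m \<in> F" "\<forall>y\<in>F. y \<noteq> m \<longrightarrow> R m y"
    by blast
  show ?case
  proof (cases "R x m")
    case True
    then have "\<forall>y\<in>insert x F. y \<noteq> x \<longrightarrow> R x y"
      using m strict_pref_trans[OF R, of x m] by auto
    then show ?thesis by blast
  next
    case False
    then have "\<forall>y\<in>insert x F. y \<noteq> m \<longrightarrow> R m y"
      using m strict_pref_total[OF R, of x m] by blast
    then show ?thesis using m(1) by blast
  qed
qed

lemma
  assumes R: "strict_pref R" and M: "finite M" "M \<noteq> {}"
  shows best_in: "best R M \<in> M"
    and best_greatest: "y \<in> M \<Longrightarrow> y \<noteq> best R M \<Longrightarrow> R (best R M) y"
proof -
  obtain x where x: "x \<in> M" "\<forall>y\<in>M. y \<noteq> x \<longrightarrow> R x y"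
    using best_exists[OF R M] by blast
  then have "best R M = x"
    by (intro best_eqI[OF R]) auto
  then show "best R M \<in> M" "y \<in> M \<Longrightarrow> y \<noteq> best R M \<Longrightarrow> R (best R M) y"
    using x by auto
qed

definition weakly_below :: "'o pref \<Rightarrow> 'o obj \<Rightarrow> 'o obj set" where
  "weakly_below R c = {x. weak_pref R c x}"

definition agrees_from :: "'o pref \<Rightarrow> 'o pref \<Rightarrow> 'o obj \<Rightarrow> bool" where
  "agrees_from Q R c \<longleftrightarrow> (\<forall>x y. weak_pref R x c \<longrightarrow> (Q x y \<longleftrightarrow> R x y))"

lemma strict_pref_above_iff_below:
  assumes R: "strict_pref R" and Q: "strict_pref Q"
  shows "(\<forall>x. Q x c \<longleftrightarrow> R x c) \<longleftrightarrow> (\<forall>y. Q c y \<longleftrightarrow> R c y)"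
proof -
  have "Q c y \<longleftrightarrow> y \<noteq> c \<and> \<not> Q y c" "R c y \<longleftrightarrow> y \<noteq> c \<and> \<not> R y c" for y
    using strict_pref_total[OF Q, of c y] strict_pref_asym[OF Q, of c y] strict_pref_irrefl[OF Q]
      strict_pref_total[OF R, of c y] strict_pref_asym[OF R, of c y] strict_pref_irrefl[OF R]
    by blast+
  then show ?thesis
    by (metis (no_types))
qed

lemma agrees_from_iff:
  assumes R: "strict_pref R" and Q: "strict_pref Q"
  shows "agrees_from Q R c \<longleftrightarrow>
    (\<forall>x. Q x c \<longleftrightarrow> R x c) \<and> (\<forall>x y. R x c \<longrightarrow> R y c \<longrightarrow> (Q x y \<longleftrightarrow> R x y))"
    (is "_ \<longleftrightarrow> ?at_c \<and> ?above")
proof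
  assume agree: "agrees_from Q R c"
  then have "\<forall>y. Q c y \<longleftrightarrow> R c y"
    by (simp add: agrees_from_def weak_pref_def)
  then show "?at_c \<and> ?above"
    using agree strict_pref_above_iff_below[OF R Q] by (simp add: agrees_from_def weak_pref_def)
next
  assume "?at_c \<and> ?above"
  then have at_c: "\<And>x. Q x c \<longleftrightarrow> R x c" "\<And>y. Q c y \<longleftrightarrow> R c y" and above: ?above
    using strict_pref_above_iff_below[OF R Q] by blast+
  show "agrees_from Q R c"
    unfolding agrees_from_def weak_pref_def
  proof (intro allI impI)
    fix x y
    assume "R x c \<or> x = c"
    then show "Q x y \<longleftrightarrow> R x y"
    proof
      assume x: "R x c"
      consider "R y c" | "y = c" | "R c y"
        using strict_pref_total[OF R, of y c] by blast
      then show ?thesis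
      proof cases
        case 1
        then show ?thesis using x above by blast
      next
        case 2
        then show ?thesis using at_c(1) by simp
      next
        case 3
        then show ?thesis
          using x at_c strict_pref_trans[OF R, of x c y] strict_pref_trans[OF Q, of x c y] by simp
      qed
    qed (use at_c in simp)
  qed
qed

lemma lower_contour_iff:
  assumes "is_profile P"
  shows "P' \<in> lower_contour P \<mu> \<longleftrightarrow> is_profile P' \<and> (\<forall>a. agrees_from (P' a) (P a) (\<mu> a))"
proof -
  have "agrees_from (P' a) (P a) (\<mu> a) \<longleftrightarrow>
      {x. P' a x (\<mu> a)} = {x. P a x (\<mu> a)} \<and>
      (\<forall>x y. P a x (\<mu> a) \<longrightarrow> P a y (\<mu> a) \<longrightarrow> (P' a x y \<longleftrightarrow> P a x y))"
    if "is_profile P'" for a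
    using agrees_from_iff[of "P a" "P' a"] assms that by (simp add: is_profile_def set_eq_iff)
  then show ?thesis
    unfolding lower_contour_def by auto
qed

lemma best_agrees_from:
  assumes R: "strict_pref R" and Q: "strict_pref Q" and agree: "agrees_from Q R c"
    and M: "finite M" "M \<noteq> {}" and above: "weak_pref R (best R M) c"
  shows "best Q M = best R M"
proof (rule best_eqI[OF Q best_in[OF R M]])
  fix y
  assume "y \<in> M" "y \<noteq> best R M"
  then show "Q (best R M) y"
    using best_greatest[OF R M] agree above by (simp add: agrees_from_def)
qed

lemma agrees_from_best:
  assumes R: "strict_pref R" and Q: "strict_pref Q" and M: "finite M" "M \<noteq> {}"
    and lower: "\<And>x y. x \<notin> M \<Longrightarrow> y \<in> M \<Longrightarrow> R x y"
    and outside: "\<And>x y. x \<notin> M \<Longrightarrow> Q x y \<longleftrightarrow> R x y"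
    and top: "\<And>y. y \<in> M \<Longrightarrow> weak_pref Q (best R M) y"
  shows "agrees_from Q R (best R M)"
  unfolding agrees_from_def
proof (intro allI impI)
  let ?b = "best R M"
  fix x y
  assume x: "weak_pref R x ?b"
  have b: "?b \<in> M" "\<And>y. y \<in> M \<Longrightarrow> y \<noteq> ?b \<Longrightarrow> R ?b y"
    using best_in[OF R M] best_greatest[OF R M] by auto
  consider "x \<notin> M" | "x = ?b"
    using x b(2) strict_pref_asym[OF R] unfolding weak_pref_def by blast
  then show "Q x y \<longleftrightarrow> R x y"
  proof cases
    case 2
    show ?thesis
    proof (cases "y \<in> M")
      case True
      then show ?thesis
        using 2 top b strict_pref_irrefl[OF R] strict_pref_irrefl[OF Q]
        unfolding weak_pref_def by metis
    next
      case False
      then have "R y ?b" "Q y ?b"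
        using lower outside b(1) by blast+
      then show ?thesis
        using 2 strict_pref_asym[OF R] strict_pref_asym[OF Q] by blast
    qed
  qed (use outside in blast)
qed

lemma weakly_below_best:
  assumes R: "strict_pref R" and M: "finite M" "M \<noteq> {}"
    and lower: "\<And>x y. x \<notin> M \<Longrightarrow> y \<in> M \<Longrightarrow> R x y"
  shows "weakly_below R (best R M) = M"
  using best_in[OF R M] best_greatest[OF R M] lower strict_pref_asym[OF R]
  unfolding weakly_below_def weak_pref_def by blast

section \<open>Runs of a pick-an-object mechanism\<close>

lemma mech_hist_0 [simp]: "mech_hist S P 0 = empty_history"
  by (simp add: mech_hist_def)

lemma mech_hist_Suc: "mech_hist S P (Suc j) = mech_step S P (mech_hist S P j)"
  by (simp add: mech_hist_def)

lemma mech_hist_Suc_agent: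
  "mech_hist S P (Suc j) a =
    (if S (mech_hist S P j) a = {} then mech_hist S P j a
     else mech_hist S P j a @ [(S (mech_hist S P j) a, best (P a) (S (mech_hist S P j) a))])"
  by (simp add: mech_hist_Suc mech_step_def)

lemma mech_hist_stationary:
  assumes "\<forall>a. S (mech_hist S P t) a = {}" and "t \<le> n"
  shows "mech_hist S P n = mech_hist S P t"
  using assms(2)
proof (induction n rule: dec_induct)
  case (step n)
  then show ?case
    using assms(1) by (simp add: mech_hist_Suc mech_step_def)
qed simp

definition pref_consistent :: "'o pref \<Rightarrow> 'o history \<Rightarrow> bool" where
  "pref_consistent R h \<longleftrightarrow> (\<forall>p\<in>set h. \<forall>x\<in>fst p. weak_pref R (snd p) x)"

definition profile_consistent :: "('ag, 'o) profile \<Rightarrow> ('ag, 'o) coll_history \<Rightarrow> bool" where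
  "profile_consistent Q h \<longleftrightarrow> is_profile Q \<and> (\<forall>a. pref_consistent (Q a) (h a))"

lemma pref_consistent_snoc [simp]:
  "pref_consistent R (h @ [p]) \<longleftrightarrow> pref_consistent R h \<and> (\<forall>x\<in>fst p. weak_pref R (snd p) x)"
  by (auto simp: pref_consistent_def)

lemma choice_history_snoc [simp]:
  "choice_history (h @ [p]) \<longleftrightarrow> choice_history h \<and> snd p \<in> fst p"
  by (auto simp: choice_history_def)

lemma mech_hist_straightforward:
  fixes S :: "('ag, 'o::finite) menu_fun"
  assumes "is_profile P"
  shows "choice_history (mech_hist S P j a) \<and> pref_consistent (P a) (mech_hist S P j a)"
proof (induction j)
  case 0
  then show ?case
    by (simp add: empty_history_def choice_history_def pref_consistent_def)
next
  case (Suc j)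
  let ?M = "S (mech_hist S P j) a"
  have R: "strict_pref (P a)"
    using assms by (simp add: is_profile_def)
  have "?M \<noteq> {} \<Longrightarrow> best (P a) ?M \<in> ?M \<and> (\<forall>x\<in>?M. weak_pref (P a) (best (P a) ?M) x)"
    using best_in[OF R] best_greatest[OF R] by (auto simp: weak_pref_def)
  then show ?case
    using Suc by (simp add: mech_hist_Suc_agent)
qed

lemma mech_hist_profile_consistent:
  fixes S :: "('ag, 'o::finite) menu_fun"
  assumes "is_profile P"
  shows "profile_consistent P (mech_hist S P j)"
  using assms mech_hist_straightforward[OF assms] by (simp add: profile_consistent_def)

lemma mech_hist_Suc_nonempty:
  assumes "menu_function S"
  shows "mech_hist S P (Suc j) a \<noteq> []"
proof (induction j)
  case 0
  then show ?case
    using assms by (simp add: mech_hist_Suc_agent menu_function_def)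
next
  case (Suc j)
  then show ?case
    by (simp add: mech_hist_Suc_agent[of S P "Suc j"])
qed

lemma mech_menu_subset:
  fixes S :: "('ag, 'o::finite) menu_fun"
  assumes S: "menu_function S" and P: "is_profile P"
  shows "S (mech_hist S P (Suc j)) a \<subseteq>
    fst (last (mech_hist S P (Suc j) a)) - {snd (last (mech_hist S P (Suc j) a))}"
proof -
  let ?h = "mech_hist S P (Suc j)"
  have "?h \<noteq> empty_history"
    using mech_hist_Suc_nonempty[OF S] by (auto simp: empty_history_def fun_eq_iff)
  then show ?thesis
    using S mech_hist_straightforward[OF P] mech_hist_Suc_nonempty[OF S]
    unfolding menu_function_def by blast
qed

lemma mech_hist_choice_in_menu:
  fixes S :: "('ag, 'o::finite) menu_fun"
  assumes S: "menu_function S" and P: "is_profile P"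
    and menu: "S (mech_hist S P k) b \<noteq> {}" and "k < n"
  shows "snd (last (mech_hist S P n b)) \<in> S (mech_hist S P k) b"
proof -
  have "fst (last (mech_hist S P n b)) \<subseteq> S (mech_hist S P k) b"
    using \<open>k < n\<close> unfolding Suc_le_eq[symmetric]
  proof (induction n rule: dec_induct)
    case base
    then show ?case
      using menu by (simp add: mech_hist_Suc_agent)
  next
    case (step n)
    then obtain m where n: "n = Suc m"
      using Suc_le_D by blast
    show ?case
      using step.IH mech_menu_subset[OF S P, of m b] unfolding n
      by (auto simp: mech_hist_Suc_agent[of S P "Suc m"])
  qed
  moreover obtain m where "n = Suc m"
    using \<open>k < n\<close> less_imp_Suc_add by blast
  then have "snd (last (mech_hist S P n b)) \<in> fst (last (mech_hist S P n b))"
    using mech_hist_straightforward[OF P] mech_hist_Suc_nonempty[OF S] last_in_set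
    unfolding choice_history_def by blast
  ultimately show ?thesis
    by blast
qed

lemma mech_hist_length_card:
  fixes S :: "('ag, 'o::finite) menu_fun"
  assumes S: "menu_function S" and P: "is_profile P"
  shows "length (mech_hist S P (Suc j) a) + card (fst (last (mech_hist S P (Suc j) a)))
      \<le> card (UNIV :: 'o obj set) + 1 \<and> fst (last (mech_hist S P (Suc j) a)) \<noteq> {}"
proof (induction j)
  case 0
  have "card (S empty_history a) \<le> card (UNIV :: 'o obj set)"
    by (simp add: card_mono)
  then show ?case
    using S by (simp add: mech_hist_Suc_agent menu_function_def empty_history_def)
next
  case (Suc j)
  let ?h = "mech_hist S P (Suc j) a" and ?M = "S (mech_hist S P (Suc j)) a"
  have "card ?M \<le> card (fst (last ?h) - {snd (last ?h)})"
    using mech_menu_subset[OF S P] by (simp add: card_mono)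
  moreover have "snd (last ?h) \<in> fst (last ?h)"
    using mech_hist_straightforward[OF P] mech_hist_Suc_nonempty[OF S] last_in_set
    unfolding choice_history_def by blast
  moreover have "card (fst (last ?h)) > 0"
    using Suc.IH by (simp add: card_gt_0_iff)
  ultimately show ?case
    using Suc.IH by (auto simp: mech_hist_Suc_agent[of S P "Suc j"])
qed

lemma mech_hist_length_le:
  fixes S :: "('ag, 'o::finite) menu_fun"
  assumes S: "menu_function S" and P: "is_profile P"
  shows "length (mech_hist S P j a) \<le> card (UNIV :: 'o obj set)"
proof (cases j)
  case (Suc i)
  have "card (fst (last (mech_hist S P (Suc i) a))) > 0"
    using mech_hist_length_card[OF S P, of i a] by (simp add: card_gt_0_iff)
  then show ?thesis
    using mech_hist_length_card[OF S P, of i a] unfolding Suc by linarith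
qed (simp add: empty_history_def)

lemma mech_terminates:
  fixes S :: "('ag::finite, 'o::finite) menu_fun"
  assumes S: "menu_function S" and P: "is_profile P"
  shows "\<exists>t. \<forall>a. S (mech_hist S P t) a = {}"
proof (rule ccontr)
  assume "\<nexists>t. \<forall>a. S (mech_hist S P t) a = {}"
  then have active: "\<exists>a. S (mech_hist S P j) a \<noteq> {}" for j
    by blast
  let ?N = "card (UNIV :: 'o obj set)"
  let ?K = "card (UNIV :: 'ag set) * ?N"
  have "j \<le> (\<Sum>a\<in>UNIV. length (mech_hist S P j a))" for j
  proof (induction j)
    case (Suc j)
    obtain a where "S (mech_hist S P j) a \<noteq> {}"
      using active by blast
    then have "(\<Sum>a\<in>UNIV. length (mech_hist S P j a)) < (\<Sum>a\<in>UNIV. length (mech_hist S P (Suc j) a))"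
      by (intro sum_strict_mono_ex1) (auto simp: mech_hist_Suc_agent)
    then show ?case
      using Suc.IH by simp
  qed simp
  moreover have "(\<Sum>a\<in>UNIV. length (mech_hist S P j a)) \<le> ?K" for j
    using sum_bounded_above[of UNIV "\<lambda>a. length (mech_hist S P j a)" ?N]
      mech_hist_length_le[OF S P] by simp
  ultimately have "Suc ?K \<le> ?K"
    using le_trans by blast
  then show False
    by simp
qed

section \<open>Sequentializable rules are monotonically discoverable\<close>

lemma sequentializes_outcome:
  assumes "sequentializes S \<phi>" "is_profile P" "\<forall>a. S (mech_hist S P t) a = {}"
  shows "snd (last (mech_hist S P t a)) = \<phi> P a"
proof -
  obtain T where T: "\<forall>a. S (mech_hist S P T) a = {}" "\<forall>a. snd (last (mech_hist S P T a)) = \<phi> P a"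
    using assms(1,2) unfolding sequentializes_def by blast
  have "mech_hist S P t = mech_hist S P T"
    using mech_hist_stationary[of S P t "max t T"] mech_hist_stationary[of S P T "max t T"] assms(3) T(1)
    by simp
  then show ?thesis
    using T(2) by simp
qed

lemma sequentializesI:
  fixes S :: "('ag::finite, 'o::finite) menu_fun" and \<phi> :: "('ag, 'o) rule"
  assumes "menu_function S"
    and "\<And>P t a. is_profile P \<Longrightarrow> \<forall>a. S (mech_hist S P t) a = {} \<Longrightarrow>
      snd (last (mech_hist S P t a)) = \<phi> P a"
  shows "sequentializes S \<phi>"
  using assms mech_terminates unfolding sequentializes_def by metis

definition picks_below :: "('ag, 'o) menu_fun \<Rightarrow> ('ag, 'o) profile \<Rightarrow> ('ag, 'o) allocation \<Rightarrow> nat \<Rightarrow> 'ag \<Rightarrow> bool" where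
  "picks_below S P \<mu> i b \<longleftrightarrow> S (mech_hist S P i) b \<noteq> {} \<and>
     \<not> weak_pref (P b) (best (P b) (S (mech_hist S P i) b)) (\<mu> b)"

lemma mech_hist_lower_contour:
  fixes S :: "('ag, 'o::finite) menu_fun"
  assumes P: "is_profile P" and P': "P' \<in> lower_contour P \<mu>"
    and above: "\<And>i b. i < k \<Longrightarrow> \<not> picks_below S P \<mu> i b"
  shows "mech_hist S P' k = mech_hist S P k"
  using above
proof (induction k)
  case (Suc k)
  have IH: "mech_hist S P' k = mech_hist S P k"
    using Suc by simp
  have same_choice: "best (P' b) (S (mech_hist S P k) b) = best (P b) (S (mech_hist S P k) b)"
    if "S (mech_hist S P k) b \<noteq> {}" for b
  proof (rule best_agrees_from)
    show "strict_pref (P b)" "strict_pref (P' b)" "agrees_from (P' b) (P b) (\<mu> b)"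
      using P P' lower_contour_iff[OF P] by (auto simp: is_profile_def)
    show "weak_pref (P b) (best (P b) (S (mech_hist S P k) b)) (\<mu> b)"
      using Suc.prems[of k b] that by (simp add: picks_below_def)
  qed (use that in simp_all)
  show ?case
    unfolding mech_hist_Suc IH mech_step_def using same_choice by (auto simp: fun_eq_iff)
qed simp

lemma lower_contour_same_outcome:
  fixes S :: "('ag, 'o::finite) menu_fun"
  assumes seq: "sequentializes S \<phi>" and P: "is_profile P" and P': "P' \<in> lower_contour P \<mu>"
    and above: "\<And>i b. \<not> picks_below S P \<mu> i b"
  shows "\<phi> P' = \<phi> P"
proof
  fix a
  obtain T where T: "\<forall>a. S (mech_hist S P T) a = {}" "\<forall>a. snd (last (mech_hist S P T a)) = \<phi> P a"
    using seq P unfolding sequentializes_def by blast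
  have "mech_hist S P' T = mech_hist S P T"
    using mech_hist_lower_contour[OF P P'] above by blast
  moreover have "is_profile P'"
    using P' lower_contour_iff[OF P] by blast
  ultimately show "\<phi> P' a = \<phi> P a"
    using sequentializes_outcome[OF seq, of P' T a] T by simp
qed

lemma lower_contour_outcome_avoids:
  fixes S :: "('ag, 'o::finite) menu_fun"
  assumes S: "menu_function S" and seq: "sequentializes S \<phi>"
    and P: "is_profile P" and P': "P' \<in> lower_contour P \<mu>"
    and before: "\<And>i b. i < k \<Longrightarrow> \<not> picks_below S P \<mu> i b" and at: "picks_below S P \<mu> k b"
  shows "\<phi> P' b \<noteq> \<mu> b"
proof -
  let ?M = "S (mech_hist S P k) b"
  have "?M \<noteq> {}" and "\<mu> b \<notin> ?M"
    using at best_greatest[of "P b" ?M "\<mu> b"] P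
    by (auto simp: picks_below_def weak_pref_def is_profile_def)
  have P'_profile: "is_profile P'"
    using P' lower_contour_iff[OF P] by blast
  have same: "mech_hist S P' k = mech_hist S P k"
    using mech_hist_lower_contour[OF P P' before] .
  obtain T where T: "\<forall>a. S (mech_hist S P' T) a = {}"
    using seq P'_profile unfolding sequentializes_def by blast
  have "k < T"
  proof (rule ccontr)
    assume "\<not> k < T"
    then have "mech_hist S P' k = mech_hist S P' T"
      using mech_hist_stationary[of S P' T k] T by simp
    then show False
      using T same \<open>?M \<noteq> {}\<close> by metis
  qed
  then have "snd (last (mech_hist S P' T b)) \<in> ?M"
    using mech_hist_choice_in_menu[OF S P'_profile, of k b T] same \<open>?M \<noteq> {}\<close> by simp
  then show ?thesis
    using sequentializes_outcome[OF seq P'_profile T] \<open>\<mu> b \<notin> ?M\<close> by metis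
qed

theorem sequentializes_imp_monotonic_discoverability:
  fixes S :: "('ag, 'o::finite) menu_fun" and \<phi> :: "('ag, 'o) rule"
  assumes S: "menu_function S" and seq: "sequentializes S \<phi>"
  shows "monotonic_discoverability \<phi>"
  unfolding monotonic_discoverability_def
proof (intro allI impI)
  fix \<mu> :: "('ag, 'o) allocation" and P :: "('ag, 'o) profile"
  assume P: "is_profile P"
  show "\<phi> P = \<mu> \<or> (\<exists>a. \<forall>P'\<in>lower_contour P \<mu>. \<phi> P' a \<noteq> \<mu> a)"
  proof (cases "\<exists>i b. picks_below S P \<mu> i b")
    case True
    then obtain k b where "picks_below S P \<mu> k b" "\<And>i b. i < k \<Longrightarrow> \<not> picks_below S P \<mu> i b"
      using exists_least_iff[of "\<lambda>i. \<exists>b. picks_below S P \<mu> i b"] by blast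
    then show ?thesis
      using lower_contour_outcome_avoids[OF S seq P] by blast
  next
    case False
    then have "\<forall>P'\<in>lower_contour P \<mu>. \<phi> P' = \<phi> P"
      using lower_contour_same_outcome[OF seq P] by blast
    then show ?thesis
      by (metis fun_eq_iff)
  qed
qed

section \<open>The discovery mechanism\<close>

definition choice_excluded :: "('ag, 'o) rule \<Rightarrow> ('ag, 'o) coll_history \<Rightarrow> 'ag \<Rightarrow> bool" where
  "choice_excluded \<phi> h a \<longleftrightarrow> (\<forall>Q. profile_consistent Q h \<longrightarrow> \<phi> Q a \<noteq> snd (last (h a)))"

definition discovery_menu :: "('ag, 'o) rule \<Rightarrow> ('ag, 'o) menu_fun" where
  "discovery_menu \<phi> h a =
    (if h a = [] then UNIV
     else if choice_excluded \<phi> h a then fst (last (h a)) - {snd (last (h a))}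
     else {})"

lemma discovery_menu_started:
  "h a \<noteq> [] \<Longrightarrow> discovery_menu \<phi> h a =
    (if choice_excluded \<phi> h a then fst (last (h a)) - {snd (last (h a))} else {})"
  by (simp add: discovery_menu_def)

lemma menu_function_discovery_menu: "menu_function (discovery_menu \<phi>)"
  unfolding menu_function_def by (auto simp: discovery_menu_def empty_history_def)

definition reveals_top_segment :: "'o pref \<Rightarrow> 'o history \<Rightarrow> bool" where
  "reveals_top_segment R h \<longleftrightarrow> h \<noteq> [] \<and> fst (last h) = weakly_below R (snd (last h)) \<and>
     (\<forall>Q. strict_pref Q \<and> pref_consistent Q h \<longrightarrow> agrees_from Q R (snd (last h)))"

lemma reveals_top_segment_first:
  fixes R :: "'o::finite pref"
  assumes R: "strict_pref R"
  shows "reveals_top_segment R [(UNIV, best R UNIV)]"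
  using weakly_below_best[OF R, of UNIV] agrees_from_best[OF R, of _ UNIV]
  by (simp add: reveals_top_segment_def pref_consistent_def)

lemma reveals_top_segment_snoc:
  fixes R :: "'o::finite pref"
  assumes R: "strict_pref R" and h: "reveals_top_segment R h"
    and M: "M = fst (last h) - {snd (last h)}" "M \<noteq> {}"
  shows "reveals_top_segment R (h @ [(M, best R M)])"
proof -
  let ?c = "snd (last h)"
  have M_below: "M = {x. R ?c x}"
    using h M(1) strict_pref_irrefl[OF R]
    by (auto simp: reveals_top_segment_def weakly_below_def weak_pref_def)
  have lower: "R x y" if "x \<notin> M" "y \<in> M" for x y
    using that strict_pref_total[OF R, of x ?c] strict_pref_trans[OF R, of x ?c y]
    unfolding M_below by auto
  have "agrees_from Q R (best R M)"
    if Q: "strict_pref Q" and "pref_consistent Q h" "\<forall>x\<in>M. weak_pref Q (best R M) x" for Q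
  proof (rule agrees_from_best[OF R Q _ M(2) lower])
    have "agrees_from Q R ?c"
      using h Q \<open>pref_consistent Q h\<close> by (simp add: reveals_top_segment_def)
    moreover have "weak_pref R x ?c" if "x \<notin> M" for x
      using that strict_pref_total[OF R, of x ?c] unfolding M_below weak_pref_def by auto
    ultimately show "Q x y \<longleftrightarrow> R x y" if "x \<notin> M" for x y
      using that by (simp add: agrees_from_def)
  qed (use that in simp_all)
  then show ?thesis
    using weakly_below_best[OF R _ M(2) lower] by (simp add: reveals_top_segment_def)
qed

lemma discovery_mech_hist:
  fixes \<phi> :: "('ag, 'o::finite) rule"
  assumes P: "is_profile P"
  shows "reveals_top_segment (P a) (mech_hist (discovery_menu \<phi>) P (Suc j) a)
    \<and> \<phi> P a \<in> fst (last (mech_hist (discovery_menu \<phi>) P (Suc j) a))"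
proof (induction j)
  case 0
  have "strict_pref (P a)"
    using P by (simp add: is_profile_def)
  then show ?case
    using reveals_top_segment_first
    by (simp add: mech_hist_Suc_agent discovery_menu_def empty_history_def)
next
  case (Suc j)
  let ?H = "mech_hist (discovery_menu \<phi>) P (Suc j)"
  let ?M = "discovery_menu \<phi> ?H a"
  show ?case
  proof (cases "?M = {}")
    case False
    then have excluded: "choice_excluded \<phi> ?H a" and M: "?M = fst (last (?H a)) - {snd (last (?H a))}"
      using Suc.IH discovery_menu_started[of ?H a \<phi>]
      by (auto simp: reveals_top_segment_def split: if_splits)
    have "\<phi> P a \<noteq> snd (last (?H a))"
      using excluded mech_hist_profile_consistent[OF P] by (simp add: choice_excluded_def)
    then have "\<phi> P a \<in> ?M"
      using M Suc.IH by blast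
    moreover have "strict_pref (P a)"
      using P by (simp add: is_profile_def)
    ultimately show ?thesis
      using reveals_top_segment_snoc[OF _ _ M False] Suc.IH False
      by (simp add: mech_hist_Suc_agent[of _ P "Suc j"])
  qed (use Suc.IH in \<open>simp add: mech_hist_Suc_agent[of _ P "Suc j"]\<close>)
qed

lemma consistent_with_top_segments:
  assumes P: "is_profile P" and reveals: "\<And>a. reveals_top_segment (P a) (H a)"
    and Q: "profile_consistent Q H"
  shows "Q \<in> lower_contour P (\<lambda>a. snd (last (H a)))"
  using Q reveals lower_contour_iff[OF P]
  by (auto simp: profile_consistent_def reveals_top_segment_def is_profile_def)

theorem monotonic_discoverability_imp_sequentializes:
  fixes \<phi> :: "('ag::finite, 'o::finite) rule"
  assumes md: "monotonic_discoverability \<phi>"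
  shows "sequentializes (discovery_menu \<phi>) \<phi>"
proof (rule sequentializesI[OF menu_function_discovery_menu])
  fix P t a
  assume P: "is_profile P" and stop: "\<forall>a. discovery_menu \<phi> (mech_hist (discovery_menu \<phi>) P t) a = {}"
  let ?H = "mech_hist (discovery_menu \<phi>) P t"
  obtain j where t: "t = Suc j"
    using stop by (cases t) (auto simp: discovery_menu_def empty_history_def)
  have reveals: "\<And>b. reveals_top_segment (P b) (?H b)" and outcome: "\<And>b. \<phi> P b \<in> fst (last (?H b))"
    using discovery_mech_hist[OF P] unfolding t by blast+
  have not_excluded: "\<not> choice_excluded \<phi> ?H b" for b
  proof
    assume excluded: "choice_excluded \<phi> ?H b"
    then have "\<phi> P b \<noteq> snd (last (?H b))"
      using mech_hist_profile_consistent[OF P] by (simp add: choice_excluded_def)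
    moreover have "fst (last (?H b)) - {snd (last (?H b))} = {}"
      using stop excluded reveals[of b] discovery_menu_started[of ?H b \<phi>]
      by (simp add: reveals_top_segment_def)
    ultimately show False
      using outcome[of b] by blast
  qed
  show "snd (last (?H a)) = \<phi> P a"
  proof (rule ccontr)
    assume "snd (last (?H a)) \<noteq> \<phi> P a"
    then obtain b where "\<forall>Q\<in>lower_contour P (\<lambda>a. snd (last (?H a))). \<phi> Q b \<noteq> snd (last (?H b))"
      using md P unfolding monotonic_discoverability_def by (metis (no_types, lifting))
    then have "choice_excluded \<phi> ?H b"
      using consistent_with_top_segments[OF P reveals] by (simp add: choice_excluded_def)
    then show False
      using not_excluded by blast
  qed
qed

theorem theorem1:
  fixes \<phi> :: "('ag::finite, 'o::finite) rule"
  assumes "individually_rational \<phi>"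
  shows "(\<exists>S. menu_function S \<and> sequentializes S \<phi>) \<longleftrightarrow> monotonic_discoverability \<phi>"
  using sequentializes_imp_monotonic_discoverability monotonic_discoverability_imp_sequentializes
    menu_function_discovery_menu
  by blast

end
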